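(* Let $S$ be a right non-degenerate semigroup of skew type with generating set $X$, $|X|=n$. Let $2\le i\le n+1$, let $Y\subseteq X$ with $|Y|=i-1$, let $Z\subseteq Y$ and $b\in D_Z$, and let $k$ be the length of $b$ in the generators $X$. Then $(S_{i-1})^k\cap D_Y\subseteq bS$. Furthermore, $(S_{i-1})^{k+1}\cap D_Y\subseteq bS_{i-1}$ and $(S_{i-1}\cap S_{i-1}')^{k+1}\cap D_Y\subseteq b(S_{i-1}\cap S_{i-1}')$.
   Context: A semigroup of skew type is a monoid $S$ with a monoid presentation $S=\langle x_1,\ldots,x_n \mid x_ix_j=x_kx_l\rangle$ consisting of $\binom{n}{2}$ relations, each of the form $x_ix_j=x_kx_l$ with $i\neq j$, $k\neq l$, such that every word $x_px_q$ with $p\neq q$ appears (as one side) in exactly one of the relations; $X=\{x_1,\ldots,x_n\}$. For $a,b\in X$, the partner of $ab$ is the other side of the unique defining relation containing $ab$ if $a\neq b$, and $ab$ itself if $a=b$. $S$ is right non-degenerate if for every $x\in X$ the map $X\to X$ sending $y$ to the first letter of the partner of $xy$ is surjective. For $W\subseteq X$: $S_W=\bigcap_{w\in W}wS$, $S'_W=\bigcap_{w\in W}Sw$, and $D_W=\{s\in S_W\mid \text{if } s=xt \text{ with } x\in X,\ t\in S, \text{ then } x\in W\}$. For $1\le j\le n$: $S_j=\bigcup_{W\subseteq X,|W|=j}S_W$ and $S'_j=\bigcup_{W\subseteq X,|W|=j}S'_W$. For subsets $A\subseteq S$, $A^k$ denotes the set of products of $k$ elements of $A$. *)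

theory Defs
  imports Main
begin

text \<open>A monoid presentation on generators X (elements of type 'a) is given by a set R of
  defining relations; a relation (u,v) in R stands for u = v, where u = (p,q) denotes the
  word x_p x_q. Elements of the monoid S are represented by words (lists over X) modulo the
  congruence generated by R; subsets of S are represented by congruence-closed sets of words.\<close>

definition offdiag :: "'a set \<Rightarrow> ('a \<times> 'a) set" where
  "offdiag X = {(a, b). a \<in> X \<and> b \<in> X \<and> a \<noteq> b}"

definition skew_presentation :: "'a set \<Rightarrow> (('a \<times> 'a) \<times> ('a \<times> 'a)) set \<Rightarrow> bool" where
  "skew_presentation X R \<longleftrightarrow>
     finite X \<and> R \<subseteq> offdiag X \<times> offdiag X \<and> card R = card X choose 2 \<and>
     (\<forall>w \<in> offdiag X. \<exists>!rel. rel \<in> R \<and> (fst rel = w \<or> snd rel = w))"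

definition rstep :: "(('a \<times> 'a) \<times> ('a \<times> 'a)) set \<Rightarrow> 'a list \<Rightarrow> 'a list \<Rightarrow> bool" where
  "rstep R u v \<longleftrightarrow> (\<exists>p q a b c d. ((a, b), (c, d)) \<in> R \<and>
      ((u = p @ [a, b] @ q \<and> v = p @ [c, d] @ q) \<or> (u = p @ [c, d] @ q \<and> v = p @ [a, b] @ q)))"

definition cong :: "(('a \<times> 'a) \<times> ('a \<times> 'a)) set \<Rightarrow> 'a list \<Rightarrow> 'a list \<Rightarrow> bool" where
  "cong R = (rstep R)\<^sup>*\<^sup>*"

definition partner :: "(('a \<times> 'a) \<times> ('a \<times> 'a)) set \<Rightarrow> 'a \<Rightarrow> 'a \<Rightarrow> 'a \<times> 'a" where
  "partner R a b = (if a = b then (a, b)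
      else (THE w. ((a, b), w) \<in> R \<or> (w, (a, b)) \<in> R))"

definition right_nondegenerate :: "'a set \<Rightarrow> (('a \<times> 'a) \<times> ('a \<times> 'a)) set \<Rightarrow> bool" where
  "right_nondegenerate X R \<longleftrightarrow> (\<forall>x \<in> X. (\<lambda>y. fst (partner R x y)) ` X = X)"

definition SW :: "'a set \<Rightarrow> (('a \<times> 'a) \<times> ('a \<times> 'a)) set \<Rightarrow> 'a set \<Rightarrow> 'a list set" where
  "SW X R W = {s \<in> lists X. \<forall>w \<in> W. \<exists>t \<in> lists X. cong R s (w # t)}"

definition SW' :: "'a set \<Rightarrow> (('a \<times> 'a) \<times> ('a \<times> 'a)) set \<Rightarrow> 'a set \<Rightarrow> 'a list set" where
  "SW' X R W = {s \<in> lists X. \<forall>w \<in> W. \<exists>t \<in> lists X. cong R s (t @ [w])}"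

definition DW :: "'a set \<Rightarrow> (('a \<times> 'a) \<times> ('a \<times> 'a)) set \<Rightarrow> 'a set \<Rightarrow> 'a list set" where
  "DW X R W = {s \<in> SW X R W. \<forall>x \<in> X. \<forall>t \<in> lists X. cong R s (x # t) \<longrightarrow> x \<in> W}"

definition Sj :: "'a set \<Rightarrow> (('a \<times> 'a) \<times> ('a \<times> 'a)) set \<Rightarrow> nat \<Rightarrow> 'a list set" where
  "Sj X R j = (\<Union>W \<in> {W. W \<subseteq> X \<and> card W = j}. SW X R W)"

definition Sj' :: "'a set \<Rightarrow> (('a \<times> 'a) \<times> ('a \<times> 'a)) set \<Rightarrow> nat \<Rightarrow> 'a list set" where
  "Sj' X R j = (\<Union>W \<in> {W. W \<subseteq> X \<and> card W = j}. SW' X R W)"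

definition setpow :: "'a set \<Rightarrow> (('a \<times> 'a) \<times> ('a \<times> 'a)) set \<Rightarrow> 'a list set \<Rightarrow> nat \<Rightarrow> 'a list set" where
  "setpow X R A k = {s \<in> lists X. \<exists>ws. length ws = k \<and> set ws \<subseteq> A \<and> cong R s (concat ws)}"

definition lmul :: "'a set \<Rightarrow> (('a \<times> 'a) \<times> ('a \<times> 'a)) set \<Rightarrow> 'a list \<Rightarrow> 'a list set \<Rightarrow> 'a list set" where
  "lmul X R b A = {s \<in> lists X. \<exists>t \<in> A. cong R s (b @ t)}"

end

theory Submission
  imports Defs
begin

text \<open>Everything is governed by the set L(s) of first letters of s, i.e. the x \<in> X with
  s \<in> xS: \<open>S\<^sub>W\<close> consists of the s with W \<subseteq> L(s), \<open>D\<^sub>W\<close> of those with L(s) = W, and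
  \<open>S\<^sub>j\<close> of those with |L(s)| \<ge> j. Right non-degeneracy makes y \<mapsto> (first letter of the partner
  of xy) injective, and it maps L(u) into L(xu); so |L| never decreases under left multiplication.

  Let s \<in> \<open>D\<^sub>Y\<close> be a product of at least k factors from \<open>S\<^sub>m\<close>, m = |Y|. The first factor
  has at least m first letters, all of them in L(s) = Y, hence exactly Y \<supseteq> Z = L(b); so it
  starts with the first letter x of b and s = xu. As L(u) still has m letters and is mapped
  injectively into L(s), it is mapped onto L(s), which forces L(b') \<subseteq> L(u) for b = xb'.
  Peeling off b letter by letter leaves a word times the remaining factors; with one factor
  left over this lies in \<open>S\<^sub>m\<close>, resp. \<open>S'\<^sub>m\<close>, as both are left ideals.\<close>

lemma rstep_sym: "rstep R u v \<Longrightarrow> rstep R v u"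
  unfolding rstep_def by blast

lemma rstep_context:
  assumes "rstep R u v"
  shows "rstep R (p @ u @ q) (p @ v @ q)"
proof -
  obtain p' q' a b c d where "((a, b), (c, d)) \<in> R"
    and "u = p' @ [a, b] @ q' \<and> v = p' @ [c, d] @ q' \<or> u = p' @ [c, d] @ q' \<and> v = p' @ [a, b] @ q'"
    using assms unfolding rstep_def by blast
  then show ?thesis
    unfolding rstep_def by (intro exI[of _ "p @ p'"] exI[of _ "q' @ q"]) auto
qed

lemma rstep_relation: "((a, b), (c, d)) \<in> R \<Longrightarrow> rstep R [a, b] [c, d]"
  unfolding rstep_def by (intro exI[of _ "[]"]) auto

lemma cong_refl: "cong R u u"
  unfolding cong_def by simp

lemma cong_trans [trans]: "cong R u v \<Longrightarrow> cong R v w \<Longrightarrow> cong R u w"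
  unfolding cong_def by (rule rtranclp_trans)

lemma cong_context: "cong R u v \<Longrightarrow> cong R (p @ u @ q) (p @ v @ q)"
  unfolding cong_def
  by (induction rule: rtranclp_induct) (auto intro: rtranclp.rtrancl_into_rtrancl rstep_context)

lemma cong_append: "cong R u u' \<Longrightarrow> cong R v v' \<Longrightarrow> cong R (u @ v) (u' @ v')"
  using cong_context[of R u u' "[]" v] cong_context[of R v v' u' "[]"] by (auto intro: cong_trans)

lemma cong_Cons: "cong R u v \<Longrightarrow> cong R (x # u) (x # v)"
  using cong_append[OF cong_refl[of R "[x]"]] by simp

lemma partner_in_relation:
  assumes "skew_presentation X R" and "x \<in> X" and "y \<in> X" and "x \<noteq> y"
  shows "((x, y), partner R x y) \<in> R \<or> (partner R x y, (x, y)) \<in> R"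
proof -
  have "(x, y) \<in> offdiag X"
    using assms by (simp add: offdiag_def)
  then obtain rel where rel: "rel \<in> R" "fst rel = (x, y) \<or> snd rel = (x, y)"
    and unique: "\<And>rel'. rel' \<in> R \<Longrightarrow> fst rel' = (x, y) \<or> snd rel' = (x, y) \<Longrightarrow> rel' = rel"
    using assms(1) unfolding skew_presentation_def by metis
  define w0 where "w0 = (if fst rel = (x, y) then snd rel else fst rel)"
  have "\<exists>!w. ((x, y), w) \<in> R \<or> (w, (x, y)) \<in> R"
  proof
    show "((x, y), w0) \<in> R \<or> (w0, (x, y)) \<in> R"
      using rel by (cases rel) (auto simp: w0_def)
  next
    fix w assume "((x, y), w) \<in> R \<or> (w, (x, y)) \<in> R"
    then show "w = w0"
      using unique by (fastforce simp: w0_def)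
  qed
  then have "((x, y), THE w. ((x, y), w) \<in> R \<or> (w, (x, y)) \<in> R) \<in> R
      \<or> (THE w. ((x, y), w) \<in> R \<or> (w, (x, y)) \<in> R, (x, y)) \<in> R"
    by (rule theI')
  then show ?thesis
    using assms(4) by (simp add: partner_def)
qed

lemma partner_mem_cong:
  assumes "skew_presentation X R" and "x \<in> X" and "y \<in> X" and "partner R x y = (c, d)"
  shows "c \<in> X" and "d \<in> X" and "cong R [x, y] [c, d]"
proof -
  have "c \<in> X \<and> d \<in> X \<and> cong R [x, y] [c, d]"
  proof (cases "x = y")
    case True
    then show ?thesis
      using assms by (auto simp: partner_def cong_refl)
  next
    case False
    then have "((x, y), (c, d)) \<in> R \<or> ((c, d), (x, y)) \<in> R"
      using partner_in_relation[OF assms(1-3)] assms(4) by simp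
    moreover have "R \<subseteq> offdiag X \<times> offdiag X"
      using assms(1) by (simp add: skew_presentation_def)
    ultimately show ?thesis
      unfolding cong_def offdiag_def by (auto intro: rstep_relation rstep_sym)
  qed
  then show "c \<in> X" and "d \<in> X" and "cong R [x, y] [c, d]"
    by auto
qed

definition partner_head :: "(('a \<times> 'a) \<times> ('a \<times> 'a)) set \<Rightarrow> 'a \<Rightarrow> 'a \<Rightarrow> 'a" where
  "partner_head R x y = fst (partner R x y)"

lemma inj_on_partner_head:
  assumes "skew_presentation X R" and "right_nondegenerate X R" and "x \<in> X"
  shows "inj_on (partner_head R x) X"
proof (rule eq_card_imp_inj_on)
  show "finite X"
    using assms(1) by (simp add: skew_presentation_def)
  show "card (partner_head R x ` X) = card X"
    using assms(2,3) by (simp add: right_nondegenerate_def partner_head_def[abs_def])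
qed

definition first_letters :: "'a set \<Rightarrow> (('a \<times> 'a) \<times> ('a \<times> 'a)) set \<Rightarrow> 'a list \<Rightarrow> 'a set" where
  "first_letters X R s = {x \<in> X. \<exists>t \<in> lists X. cong R s (x # t)}"

lemma first_letters_subset: "first_letters X R s \<subseteq> X"
  unfolding first_letters_def by blast

lemma finite_first_letters: "skew_presentation X R \<Longrightarrow> finite (first_letters X R s)"
  by (meson finite_subset first_letters_subset skew_presentation_def)

lemma first_letters_cong: "cong R s s' \<Longrightarrow> first_letters X R s' \<subseteq> first_letters X R s"
  unfolding first_letters_def by (blast intro: cong_trans)

lemma first_letters_append:
  assumes "q \<in> lists X"
  shows "first_letters X R p \<subseteq> first_letters X R (p @ q)"
proof
  fix x assume "x \<in> first_letters X R p"
  then obtain t where "x \<in> X" "t \<in> lists X" and "cong R p (x # t)"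
    unfolding first_letters_def by blast
  moreover from \<open>cong R p (x # t)\<close> have "cong R (p @ q) (x # (t @ q))"
    using cong_append[OF _ cong_refl[of R q]] by fastforce
  ultimately show "x \<in> first_letters X R (p @ q)"
    unfolding first_letters_def using assms by (auto intro!: bexI[of _ "t @ q"])
qed

lemma first_letters_prefix:
  "cong R s (p @ q) \<Longrightarrow> q \<in> lists X \<Longrightarrow> first_letters X R p \<subseteq> first_letters X R s"
  using first_letters_append[of q X R p] first_letters_cong[of R s "p @ q" X] by blast

lemma partner_head_first_letters:
  assumes "skew_presentation X R" and "x \<in> X" and "cong R s (x # u)"
  shows "partner_head R x ` first_letters X R u \<subseteq> first_letters X R s"
proof
  fix c assume "c \<in> partner_head R x ` first_letters X R u"
  then obtain y where "y \<in> first_letters X R u" and c: "c = partner_head R x y"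
    by blast
  then obtain r where y: "y \<in> X" "r \<in> lists X" "cong R u (y # r)"
    unfolding first_letters_def by blast
  obtain d where cd: "partner R x y = (c, d)"
    using c by (cases "partner R x y") (simp add: partner_head_def)
  note partner = partner_mem_cong[OF assms(1,2) y(1) cd]
  have "cong R (x # u) ([x, y] @ r)"
    using cong_Cons[OF y(3)] by simp
  also have "cong R ([x, y] @ r) (c # d # r)"
    using cong_append[OF partner(3) cong_refl] by simp
  finally have "cong R s (c # d # r)"
    using assms(3) cong_trans by blast
  then show "c \<in> first_letters X R s"
    unfolding first_letters_def using partner(1,2) y(2) by (auto intro!: bexI[of _ "d # r"])
qed

lemma card_first_letters_Cons:
  assumes "skew_presentation X R" and "right_nondegenerate X R" and "x \<in> X"
  shows "card (first_letters X R u) \<le> card (first_letters X R (x # u))"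
proof -
  have "card (first_letters X R u) = card (partner_head R x ` first_letters X R u)"
    using inj_on_subset[OF inj_on_partner_head[OF assms] first_letters_subset]
    by (simp add: card_image)
  also have "\<dots> \<le> card (first_letters X R (x # u))"
    using finite_first_letters[OF assms(1)] partner_head_first_letters[OF assms(1,3) cong_refl]
    by (rule card_mono)
  finally show ?thesis .
qed

lemma card_first_letters_append:
  assumes "skew_presentation X R" and "right_nondegenerate X R"
  shows "p \<in> lists X \<Longrightarrow> card (first_letters X R v) \<le> card (first_letters X R (p @ v))"
proof (induction p)
  case (Cons x p)
  then have "card (first_letters X R v) \<le> card (first_letters X R (p @ v))"
    by simp
  also have "\<dots> \<le> card (first_letters X R (x # p @ v))"
    using Cons.prems by (simp add: card_first_letters_Cons[OF assms])
  finally show ?case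
    by simp
qed simp

text \<open>If x u has no more first letters than u, the injection \<open>partner_head R x\<close> maps the
  first letters of u onto those of x u.\<close>

lemma first_letters_Cons_cancel:
  assumes sk: "skew_presentation X R" and rn: "right_nondegenerate X R" and x: "x \<in> X"
    and su: "cong R s (x # u)" and card: "card (first_letters X R s) \<le> card (first_letters X R u)"
    and b: "first_letters X R (x # b) \<subseteq> first_letters X R s"
  shows "first_letters X R b \<subseteq> first_letters X R u"
proof -
  let ?\<sigma> = "partner_head R x"
  have inj: "inj_on ?\<sigma> X"
    using inj_on_partner_head[OF sk rn x] .
  have "?\<sigma> ` first_letters X R u = first_letters X R s"
  proof (rule card_subset_eq[OF finite_first_letters[OF sk] partner_head_first_letters[OF sk x su]])
    have "card (?\<sigma> ` first_letters X R u) = card (first_letters X R u)"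
      using inj_on_subset[OF inj first_letters_subset] by (rule card_image)
    then show "card (?\<sigma> ` first_letters X R u) = card (first_letters X R s)"
      using card card_mono[OF finite_first_letters[OF sk] partner_head_first_letters[OF sk x su]]
      by linarith
  qed
  moreover have "?\<sigma> ` first_letters X R b \<subseteq> first_letters X R s"
    using partner_head_first_letters[OF sk x cong_refl] b by blast
  ultimately have \<sigma>b: "?\<sigma> ` first_letters X R b \<subseteq> ?\<sigma> ` first_letters X R u"
    by simp
  show ?thesis
  proof
    fix z assume z: "z \<in> first_letters X R b"
    then have "?\<sigma> z \<in> ?\<sigma> ` first_letters X R u"
      using \<sigma>b by blast
    then show "z \<in> first_letters X R u"
      using inj_on_image_mem_iff[OF inj _ first_letters_subset] z first_letters_subset[of X R b]
      by blast
  qed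
qed

lemma SW_iff_first_letters:
  "W \<subseteq> X \<Longrightarrow> s \<in> SW X R W \<longleftrightarrow> s \<in> lists X \<and> W \<subseteq> first_letters X R s"
  unfolding SW_def first_letters_def by blast

lemma DW_iff_first_letters:
  assumes "W \<subseteq> X"
  shows "s \<in> DW X R W \<longleftrightarrow> s \<in> lists X \<and> first_letters X R s = W"
proof -
  have "s \<in> DW X R W \<longleftrightarrow> s \<in> SW X R W \<and> first_letters X R s \<subseteq> W"
    unfolding DW_def first_letters_def by blast
  then show ?thesis
    using SW_iff_first_letters[OF assms] by blast
qed

lemma Sj_iff_card_first_letters:
  assumes "skew_presentation X R"
  shows "s \<in> Sj X R m \<longleftrightarrow> s \<in> lists X \<and> m \<le> card (first_letters X R s)"
proof
  assume "s \<in> Sj X R m"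
  then obtain W where W: "W \<subseteq> X" "card W = m" "s \<in> SW X R W"
    unfolding Sj_def by blast
  then have "s \<in> lists X" and sub: "W \<subseteq> first_letters X R s"
    using SW_iff_first_letters[OF W(1)] by simp_all
  then show "s \<in> lists X \<and> m \<le> card (first_letters X R s)"
    using card_mono[OF finite_first_letters[OF assms] sub] W(2) by simp
next
  assume s: "s \<in> lists X \<and> m \<le> card (first_letters X R s)"
  then obtain W where W: "W \<subseteq> first_letters X R s" "card W = m"
    by (auto elim: obtain_subset_with_card_n)
  then have "W \<subseteq> X"
    using first_letters_subset[of X R s] by blast
  then have "s \<in> SW X R W"
    using SW_iff_first_letters[OF \<open>W \<subseteq> X\<close>] s W(1) by simp
  then show "s \<in> Sj X R m"
    unfolding Sj_def using W(2) \<open>W \<subseteq> X\<close> by blast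
qed

lemma Sj_subset_lists: "Sj X R m \<subseteq> lists X"
  unfolding Sj_def SW_def by blast

definition left_ideal :: "'a set \<Rightarrow> (('a \<times> 'a) \<times> ('a \<times> 'a)) set \<Rightarrow> 'a list set \<Rightarrow> bool" where
  "left_ideal X R A \<longleftrightarrow> A \<subseteq> lists X \<and>
     (\<forall>s \<in> A. \<forall>p \<in> lists X. \<forall>s' \<in> lists X. cong R s' (p @ s) \<longrightarrow> s' \<in> A)"

lemma left_idealD:
  "left_ideal X R A \<Longrightarrow> s \<in> A \<Longrightarrow> p \<in> lists X \<Longrightarrow> s' \<in> lists X \<Longrightarrow>
    cong R s' (p @ s) \<Longrightarrow> s' \<in> A"
  unfolding left_ideal_def by blast

lemma left_ideal_Int: "left_ideal X R A \<Longrightarrow> left_ideal X R B \<Longrightarrow> left_ideal X R (A \<inter> B)"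
  unfolding left_ideal_def by blast

lemma left_ideal_Sj:
  assumes sk: "skew_presentation X R" and rn: "right_nondegenerate X R"
  shows "left_ideal X R (Sj X R m)"
  unfolding left_ideal_def
proof (intro conjI ballI impI)
  show "Sj X R m \<subseteq> lists X"
    by (rule Sj_subset_lists)
  fix s p s' assume s: "s \<in> Sj X R m" and p: "p \<in> lists X" and s': "s' \<in> lists X"
    and s'ps: "cong R s' (p @ s)"
  have "m \<le> card (first_letters X R s)"
    using s Sj_iff_card_first_letters[OF sk] by blast
  also have "\<dots> \<le> card (first_letters X R (p @ s))"
    using card_first_letters_append[OF sk rn p] .
  also have "\<dots> \<le> card (first_letters X R s')"
    using card_mono[OF finite_first_letters[OF sk] first_letters_cong[OF s'ps]] .
  finally show "s' \<in> Sj X R m"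
    using s' Sj_iff_card_first_letters[OF sk] by blast
qed

lemma left_ideal_Sj': "left_ideal X R (Sj' X R m)"
  unfolding left_ideal_def
proof (intro conjI ballI impI)
  show "Sj' X R m \<subseteq> lists X"
    unfolding Sj'_def SW'_def by blast
  fix s p s' assume s: "s \<in> Sj' X R m" and p: "p \<in> lists X" and s': "s' \<in> lists X"
    and s'ps: "cong R s' (p @ s)"
  from s obtain W where W: "W \<subseteq> X" "card W = m" "s \<in> SW' X R W"
    unfolding Sj'_def by blast
  have "s' \<in> SW' X R W"
    unfolding SW'_def
  proof (intro CollectI conjI ballI)
    fix w assume "w \<in> W"
    then obtain t where t: "t \<in> lists X" "cong R s (t @ [w])"
      using W(3) unfolding SW'_def by blast
    have "cong R s' ((p @ t) @ [w])"
      using cong_trans[OF s'ps cong_append[OF cong_refl[of R p] t(2)]] by simp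
    then show "\<exists>t \<in> lists X. cong R s' (t @ [w])"
      using p t(1) by (auto intro!: bexI[of _ "p @ t"])
  qed (rule s')
  then show "s' \<in> Sj' X R m"
    unfolding Sj'_def using W(1,2) by blast
qed

lemma card_first_letters_Sj_product:
  assumes sk: "skew_presentation X R" and rn: "right_nondegenerate X R"
    and ss: "set ss \<subseteq> Sj X R m" "ss \<noteq> []" and p: "p \<in> lists X"
  shows "m \<le> card (first_letters X R (p @ concat ss))"
proof -
  obtain s1 ss' where ss_Cons: "ss = s1 # ss'"
    using ss(2) by (cases ss) auto
  have "concat ss' \<in> lists X"
    using ss(1) Sj_subset_lists ss_Cons by fastforce
  have "m \<le> card (first_letters X R s1)"
    using ss(1) ss_Cons Sj_iff_card_first_letters[OF sk] by auto
  also have "\<dots> \<le> card (first_letters X R (p @ s1))"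
    using card_first_letters_append[OF sk rn p] .
  also have "\<dots> \<le> card (first_letters X R (p @ concat ss))"
    using card_mono[OF finite_first_letters[OF sk]
        first_letters_append[OF \<open>concat ss' \<in> lists X\<close>, of R "p @ s1"]]
    by (simp add: ss_Cons)
  finally show ?thesis .
qed

text \<open>The prefix p is needed to carry the induction; the shape of the remainder t (a word times
  the factors not consumed by b) is what yields the statements about \<open>b S\<^sub>m\<close> below.\<close>

lemma Sj_product_left_divisible:
  assumes sk: "skew_presentation X R" and rn: "right_nondegenerate X R"
  shows "b \<in> lists X \<Longrightarrow> length b \<le> length ss \<Longrightarrow> set ss \<subseteq> Sj X R m \<Longrightarrow> p \<in> lists X \<Longrightarrow>
    cong R s (p @ concat ss) \<Longrightarrow> card (first_letters X R s) \<le> m \<Longrightarrow>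
    first_letters X R b \<subseteq> first_letters X R s \<Longrightarrow>
    \<exists>t \<in> lists X. cong R s (b @ t) \<and> (\<exists>q \<in> lists X. cong R t (q @ concat (drop (length b) ss)))"
proof (induction b arbitrary: p ss s)
  case Nil
  show ?case
  proof (intro bexI conjI)
    show "cong R s ([] @ p @ concat ss)"
      using Nil.prems(5) by simp
    show "cong R (p @ concat ss) (p @ concat (drop (length []) ss))"
      by (simp add: cong_refl)
    show "p @ concat ss \<in> lists X"
      using Nil.prems(3,4) Sj_subset_lists by fastforce
  qed (rule Nil.prems(4))
next
  case (Cons x b)
  obtain s1 ss' where ss: "ss = s1 # ss'"
    using Cons.prems(2) by (cases ss) auto
  have x: "x \<in> X" and b: "b \<in> lists X"
    using Cons.prems(1) by auto
  have s1: "s1 \<in> Sj X R m" and ss': "set ss' \<subseteq> Sj X R m" and "concat ss' \<in> lists X"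
    using Cons.prems(3) Sj_subset_lists ss by fastforce+
  have s_split: "cong R s ((p @ s1) @ concat ss')"
    using Cons.prems(5) ss by simp
  have sub: "first_letters X R (p @ s1) \<subseteq> first_letters X R s"
    using s_split \<open>concat ss' \<in> lists X\<close> by (rule first_letters_prefix)
  moreover have "card (first_letters X R s) \<le> card (first_letters X R (p @ s1))"
    using card_first_letters_Sj_product[OF sk rn _ _ Cons.prems(4), of "[s1]" m] s1 Cons.prems(6)
    by simp
  ultimately have "first_letters X R (p @ s1) = first_letters X R s"
    using card_subset_eq[OF finite_first_letters[OF sk] sub]
      card_mono[OF finite_first_letters[OF sk] sub]
    by linarith
  moreover have "x \<in> first_letters X R s"
    using Cons.prems(7) x b cong_refl unfolding first_letters_def by blast
  ultimately obtain t1 where t1: "t1 \<in> lists X" "cong R (p @ s1) (x # t1)"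
    unfolding first_letters_def by blast
  define u where "u = t1 @ concat ss'"
  have u: "u \<in> lists X"
    using t1(1) \<open>concat ss' \<in> lists X\<close> by (simp add: u_def)
  have su: "cong R s (x # u)"
    using cong_trans[OF s_split cong_append[OF t1(2) cong_refl[of R "concat ss'"]]]
    by (simp add: u_def)
  show ?case
  proof (cases "b = []")
    case True
    show ?thesis
    proof (intro bexI conjI)
      show "cong R s ((x # b) @ u)"
        using su True by simp
      show "cong R u (t1 @ concat (drop (length (x # b)) ss))"
        using True ss by (simp add: u_def cong_refl)
    qed (use t1(1) u in auto)
  next
    case False
    then have "ss' \<noteq> []"
      using Cons.prems(2) ss by auto
    then have "m \<le> card (first_letters X R u)"
      using card_first_letters_Sj_product[OF sk rn ss' _ t1(1)] by (simp add: u_def)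
    then have "first_letters X R b \<subseteq> first_letters X R u"
      using first_letters_Cons_cancel[OF sk rn x su] Cons.prems(6,7) by simp
    moreover have "card (first_letters X R u) \<le> m"
      using card_first_letters_Cons[OF sk rn x, of u] Cons.prems(6)
        card_mono[OF finite_first_letters[OF sk] first_letters_cong[OF su]] by linarith
    moreover have "length b \<le> length ss'"
      using Cons.prems(2) ss by simp
    ultimately obtain t q where t: "t \<in> lists X" "cong R u (b @ t)"
      and q: "q \<in> lists X" "cong R t (q @ concat (drop (length b) ss'))"
      using Cons.IH[OF b _ ss' t1(1)] cong_refl[of R u] unfolding u_def by blast
    have "cong R s ((x # b) @ t)"
      using cong_trans[OF su cong_Cons[OF t(2)]] by simp
    then show ?thesis
      using t(1) q ss by auto
  qed
qed

lemma setpow_DW_left_divisible: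
  assumes sk: "skew_presentation X R" and rn: "right_nondegenerate X R"
    and "Y \<subseteq> X" and "card Y \<le> m" and "Z \<subseteq> Y" and "b \<in> DW X R Z"
    and "A \<subseteq> Sj X R m" and "length b \<le> l" and s: "s \<in> setpow X R A l \<inter> DW X R Y"
  obtains t q ws where "t \<in> lists X" "cong R s (b @ t)" "length ws = l" "set ws \<subseteq> A"
    "q \<in> lists X" "cong R t (q @ concat (drop (length b) ws))"
proof -
  obtain ws where ws: "length ws = l" "set ws \<subseteq> A" "cong R s ([] @ concat ws)"
    using s unfolding setpow_def by auto
  have "first_letters X R s = Y"
    using s DW_iff_first_letters[OF \<open>Y \<subseteq> X\<close>] by blast
  moreover have "Z \<subseteq> X"
    using \<open>Z \<subseteq> Y\<close> \<open>Y \<subseteq> X\<close> by (rule subset_trans)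
  then have "b \<in> lists X" and "first_letters X R b = Z"
    using \<open>b \<in> DW X R Z\<close> DW_iff_first_letters by blast+
  ultimately show ?thesis
    using Sj_product_left_divisible[OF sk rn \<open>b \<in> lists X\<close> _ _ lists.Nil ws(3)]
      ws(1,2) assms(4,5,7,8) that by blast
qed

lemma setpow_Sj_DW_subset_lmul:
  assumes "skew_presentation X R" and "right_nondegenerate X R"
    and "Y \<subseteq> X" and "card Y \<le> m" and "Z \<subseteq> Y" and "b \<in> DW X R Z"
  shows "setpow X R (Sj X R m) (length b) \<inter> DW X R Y \<subseteq> lmul X R b (lists X)"
proof
  fix s assume s: "s \<in> setpow X R (Sj X R m) (length b) \<inter> DW X R Y"
  then obtain t where "t \<in> lists X" "cong R s (b @ t)"
    using setpow_DW_left_divisible[OF assms order_refl order_refl] by metis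
  then show "s \<in> lmul X R b (lists X)"
    using s unfolding lmul_def setpow_def by blast
qed

lemma setpow_left_ideal_DW_subset_lmul:
  assumes "skew_presentation X R" and "right_nondegenerate X R"
    and "Y \<subseteq> X" and "card Y \<le> m" and "Z \<subseteq> Y" and "b \<in> DW X R Z"
    and A: "left_ideal X R A" "A \<subseteq> Sj X R m"
  shows "setpow X R A (Suc (length b)) \<inter> DW X R Y \<subseteq> lmul X R b A"
proof
  fix s assume s: "s \<in> setpow X R A (Suc (length b)) \<inter> DW X R Y"
  then obtain t q ws where t: "t \<in> lists X" "cong R s (b @ t)"
    and ws: "length ws = Suc (length b)" "set ws \<subseteq> A"
    and q: "q \<in> lists X" "cong R t (q @ concat (drop (length b) ws))"
    using setpow_DW_left_divisible[OF assms(1-6) A(2) le_SucI[OF order_refl]] by metis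
  obtain ws' a where ws_snoc: "ws = ws' @ [a]" "length ws' = length b"
    using ws(1) by (auto simp: length_Suc_conv_rev)
  then have "t \<in> A"
    using left_idealD[OF A(1) _ q(1) t(1)] q(2) ws(2) by force
  then show "s \<in> lmul X R b A"
    using s t(2) unfolding lmul_def setpow_def by blast
qed

theorem lemma4p3:
  fixes X :: "'a set" and R :: "(('a \<times> 'a) \<times> ('a \<times> 'a)) set"
    and n i k :: nat and Y Z :: "'a set" and b :: "'a list"
  assumes "skew_presentation X R" and "right_nondegenerate X R" and "card X = n"
    and "2 \<le> i" and "i \<le> n + 1"
    and "Y \<subseteq> X" and "card Y = i - 1" and "Z \<subseteq> Y"
    and "b \<in> DW X R Z" and "k = length b"
  shows "setpow X R (Sj X R (i - 1)) k \<inter> DW X R Y \<subseteq> lmul X R b (lists X) \<and>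
    setpow X R (Sj X R (i - 1)) (k + 1) \<inter> DW X R Y \<subseteq> lmul X R b (Sj X R (i - 1)) \<and>
    setpow X R (Sj X R (i - 1) \<inter> Sj' X R (i - 1)) (k + 1) \<inter> DW X R Y
           \<subseteq> lmul X R b (Sj X R (i - 1) \<inter> Sj' X R (i - 1))"
proof -
  have "card Y \<le> i - 1"
    using \<open>card Y = i - 1\<close> by simp
  note setting = assms(1,2,6) this assms(8,9)
  have Sj: "left_ideal X R (Sj X R (i - 1))"
    using left_ideal_Sj[OF assms(1,2)] .
  have Sj_Int_Sj': "left_ideal X R (Sj X R (i - 1) \<inter> Sj' X R (i - 1))"
    using left_ideal_Int[OF Sj left_ideal_Sj'] .
  show ?thesis
    using setpow_Sj_DW_subset_lmul[OF setting]
      setpow_left_ideal_DW_subset_lmul[OF setting Sj order_refl]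
      setpow_left_ideal_DW_subset_lmul[OF setting Sj_Int_Sj' Int_lower1]
      \<open>k = length b\<close> by simp
qed

end
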